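(* Let $\mathbb{K}$ be an algebraically closed field of characteristic zero, let $D$ be a simple derivation of $\mathbb{K}[x,y]$ and let $\rho\in\mathrm{Aut}(D)$. If $\rho$ stabilizes the ideal $(x)\subset\mathbb{K}[x,y]$ generated by $x$, then $\rho=\mathrm{id}$.
   Context: A derivation of $\mathbb{K}[x,y]$ is a $\mathbb{K}$-linear map $D$ with $D(fg)=gD(f)+fD(g)$. $D$ is simple if there is no ideal $I$ with $(0)\neq I\neq \mathbb{K}[x,y]$ and $D(I)\subseteq I$. $\mathrm{Aut}(D)$ denotes the group of $\mathbb{K}$-algebra automorphisms $\rho$ of $\mathbb{K}[x,y]$ with $\rho D=D\rho$. *)

theory Defs
  imports "HOL-Computational_Algebra.Polynomial"
begin

text \<open>K[x,y] is modelled as (K[x])[y], i.e. the type 'a poly poly: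
  the outer polynomial variable is y, the inner one is x.\<close>

type_synonym 'a bipoly = "'a poly poly"

definition alg_closed :: "'a::field itself \<Rightarrow> bool" where
  "alg_closed _ \<longleftrightarrow> (\<forall>p::'a poly. degree p > 0 \<longrightarrow> (\<exists>z. poly p z = 0))"

definition kconst :: "'a::comm_ring_1 \<Rightarrow> 'a bipoly" where
  "kconst c = [:[:c:]:]"

definition varx :: "'a::comm_ring_1 bipoly" where
  "varx = [:[:0, 1:]:]"

definition vary :: "'a::comm_ring_1 bipoly" where
  "vary = [:0, 1:]"

definition is_ideal :: "'a::comm_ring_1 bipoly set \<Rightarrow> bool" where
  "is_ideal I \<longleftrightarrow> 0 \<in> I \<and> (\<forall>a\<in>I. \<forall>b\<in>I. a + b \<in> I) \<and> (\<forall>a\<in>I. \<forall>r. r * a \<in> I)"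

definition principal_ideal :: "'a::comm_ring_1 bipoly \<Rightarrow> 'a bipoly set" where
  "principal_ideal g = {g * f | f. True}"

definition is_derivation :: "('a::comm_ring_1 bipoly \<Rightarrow> 'a bipoly) \<Rightarrow> bool" where
  "is_derivation D \<longleftrightarrow>
     (\<forall>f g. D (f + g) = D f + D g) \<and>
     (\<forall>c f. D (kconst c * f) = kconst c * D f) \<and>
     (\<forall>f g. D (f * g) = g * D f + f * D g)"

definition simple_derivation :: "('a::comm_ring_1 bipoly \<Rightarrow> 'a bipoly) \<Rightarrow> bool" where
  "simple_derivation D \<longleftrightarrow> is_derivation D \<and>
     (\<forall>I. is_ideal I \<and> I \<noteq> {0} \<and> I \<noteq> UNIV \<longrightarrow> \<not> (D ` I \<subseteq> I))"

definition is_K_automorphism :: "('a::comm_ring_1 bipoly \<Rightarrow> 'a bipoly) \<Rightarrow> bool" where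
  "is_K_automorphism \<rho> \<longleftrightarrow> bij \<rho> \<and>
     (\<forall>f g. \<rho> (f + g) = \<rho> f + \<rho> g) \<and>
     (\<forall>f g. \<rho> (f * g) = \<rho> f * \<rho> g) \<and>
     \<rho> 1 = 1 \<and>
     (\<forall>c f. \<rho> (kconst c * f) = kconst c * \<rho> f)"

definition Aut_der :: "('a::comm_ring_1 bipoly \<Rightarrow> 'a bipoly) \<Rightarrow> ('a bipoly \<Rightarrow> 'a bipoly) set" where
  "Aut_der D = {\<rho>. is_K_automorphism \<rho> \<and> \<rho> \<circ> D = D \<circ> \<rho>}"

end

theory Submission
  imports Defs
begin

text \<open>
  As \<open>\<rho>\<close> stabilises \<open>(x)\<close>, it acts on the line \<open>x = 0\<close> by \<open>y \<mapsto> t(y) := (\<rho> y)(0, y)\<close>.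
  If \<open>t\<close> has a fixed point \<open>y\<^sub>0\<close>, then evaluation at \<open>(0, y\<^sub>0)\<close> is \<open>\<rho>\<close>-invariant, so the ideal
  generated by all \<open>\<rho> f - f\<close> is proper; it is \<open>D\<close>-stable because \<open>\<rho>\<close> commutes with \<open>D\<close>, hence
  zero by simplicity, i.e. \<open>\<rho> = id\<close>.
  Otherwise \<open>t(y) - y\<close> has no root, so \<open>t(y) = y + b\<close> with \<open>b \<noteq> 0\<close>. Comparing leading coefficients
  in \<open>\<rho>(D x) = D(l x) = l \<cdot> D x\<close> on the line forces \<open>\<rho> x = x\<close>, and then \<open>\<rho>\<close> is the substitution
  \<open>y \<mapsto> y + v(x)\<close> with \<open>v(0) = b\<close>. Its invariants are exactly \<open>\<bbbK>[x]\<close>, which forces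
  \<open>D x = c\<^sub>0 \<noteq> 0\<close> and \<open>D y = \<beta>(x)\<close>; but then \<open>c\<^sub>0 y - \<integral>\<beta>\<close> is a non-constant element of the kernel
  of \<open>D\<close>, contradicting simplicity.
\<close>

lemma bipoly_induct:
  fixes P :: "'a::comm_ring_1 bipoly \<Rightarrow> bool"
  assumes "\<And>c. P (kconst c)" and "P varx" and "P vary"
    and "\<And>f g. P f \<Longrightarrow> P g \<Longrightarrow> P (f + g)"
    and "\<And>f g. P f \<Longrightarrow> P g \<Longrightarrow> P (f * g)"
  shows "P f"
proof -
  have const: "P [:a:]" for a
  proof (induct a)
    case 0
    then show ?case using assms(1)[of 0] by (simp add: kconst_def)
  next
    case (pCons c a)
    have "[:pCons c a:] = kconst c + varx * [:a:]"
      by (simp add: kconst_def varx_def)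
    then show ?case using assms pCons by metis
  qed
  show ?thesis
  proof (induct f)
    case 0
    then show ?case using const[of 0] by simp
  next
    case (pCons a f)
    have "pCons a f = [:a:] + vary * f" by (simp add: vary_def)
    then show ?case using assms const pCons by metis
  qed
qed

lemma derivation_simps:
  assumes "is_derivation D"
  shows "D (f + g) = D f + D g" "D (f * g) = g * D f + f * D g"
    "D (f - g) = D f - D g" "D 0 = 0" "D 1 = 0" "D (kconst c) = 0"
proof -
  show add: "D (f + g) = D f + D g" for f g
    using assms by (simp add: is_derivation_def)
  show "D (f * g) = g * D f + f * D g"
    using assms by (simp add: is_derivation_def)
  have "D (f - g + g) = D (f - g) + D g" by (rule add)
  then show "D (f - g) = D f - D g" by (simp add: algebra_simps)
  have "D (0 + 0) = D 0 + D 0" by (rule add)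
  then show "D 0 = 0" by simp
  have "D (1 * 1) = 1 * D 1 + 1 * D 1"
    using assms unfolding is_derivation_def by blast
  then show D1: "D 1 = 0" by simp
  have "D (kconst c * 1) = kconst c * D 1"
    using assms unfolding is_derivation_def by blast
  then show "D (kconst c) = 0" using D1 by simp
qed

lemma derivation_const_y:
  assumes "is_derivation D"
  shows "D [:a:] = [:pderiv a:] * D varx"
proof (induct a)
  case 0
  then show ?case using derivation_simps[OF assms] by simp
next
  case (pCons c a)
  have "[:pCons c a:] = kconst c + [:a:] * varx"
    by (simp add: kconst_def varx_def)
  then have "D [:pCons c a:] = varx * ([:pderiv a:] * D varx) + [:a:] * D varx"
    by (simp only: derivation_simps[OF assms] pCons add_0_left)
  also have "\<dots> = ([:a:] + varx * [:pderiv a:]) * D varx"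
    by (simp add: algebra_simps)
  also have "[:a:] + varx * [:pderiv a:] = [:pderiv (pCons c a):]"
    by (simp add: varx_def pderiv_pCons)
  finally show ?case .
qed

lemma K_automorphism_simps:
  assumes "is_K_automorphism \<rho>"
  shows "\<rho> (f + g) = \<rho> f + \<rho> g" "\<rho> (f * g) = \<rho> f * \<rho> g"
    "\<rho> (f - g) = \<rho> f - \<rho> g" "\<rho> 0 = 0" "\<rho> 1 = 1" "\<rho> (kconst c) = kconst c"
proof -
  show add: "\<rho> (f + g) = \<rho> f + \<rho> g" for f g
    using assms by (simp add: is_K_automorphism_def)
  show "\<rho> (f * g) = \<rho> f * \<rho> g" "\<rho> 1 = 1"
    using assms by (simp_all add: is_K_automorphism_def)
  have "\<rho> (f - g + g) = \<rho> (f - g) + \<rho> g" by (rule add)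
  then show "\<rho> (f - g) = \<rho> f - \<rho> g" by (simp add: algebra_simps)
  have "\<rho> (0 + 0) = \<rho> 0 + \<rho> 0" by (rule add)
  then show "\<rho> 0 = 0" by simp
  have "\<rho> (kconst c * 1) = kconst c * \<rho> 1"
    using assms unfolding is_K_automorphism_def by blast
  then show "\<rho> (kconst c) = kconst c"
    using assms by (simp add: is_K_automorphism_def)
qed

lemma K_automorphism_stabilising_varx:
  fixes \<rho> :: "'a::field bipoly \<Rightarrow> 'a bipoly"
  assumes aut: "is_K_automorphism \<rho>"
    and stable: "\<rho> ` principal_ideal varx = principal_ideal varx"
  obtains l where "\<rho> varx = kconst l * varx"
proof -
  have "varx \<in> principal_ideal varx"
    unfolding principal_ideal_def by (auto intro: exI[of _ 1])
  then have "\<rho> varx \<in> principal_ideal varx" "varx \<in> \<rho> ` principal_ideal varx"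
    using stable by auto
  then obtain u w where u: "\<rho> varx = varx * u" and w: "varx = \<rho> (varx * w)"
    unfolding principal_ideal_def by auto
  have "varx * 1 = varx * (u * \<rho> w)"
    using w u K_automorphism_simps[OF aut] by (simp add: mult.assoc)
  moreover have "varx \<noteq> (0 :: 'a bipoly)" by (simp add: varx_def)
  ultimately have "u * \<rho> w = 1" by (simp only: mult_cancel_left) simp
  then have "is_unit u" by (metis dvd_triv_left)
  then obtain a where "u = [:a:]" "is_unit a" using is_unit_poly_iff by blast
  moreover obtain l where "a = [:l:]" using \<open>is_unit a\<close> is_unit_poly_iff by blast
  ultimately have "\<rho> varx = kconst l * varx"
    using u by (simp add: kconst_def mult.commute)
  then show thesis by (rule that)
qed

lemma K_automorphism_fixing_varx:
  assumes aut: "is_K_automorphism \<rho>" and fix_x: "\<rho> varx = varx"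
  shows "\<rho> f = pcompose f (\<rho> vary)"
proof -
  have const: "\<rho> [:a:] = [:a:]" for a
  proof (induct a)
    case 0
    then show ?case by (simp add: K_automorphism_simps[OF aut])
  next
    case (pCons c a)
    have "[:pCons c a:] = kconst c + varx * [:a:]" by (simp add: kconst_def varx_def)
    then show ?case using pCons by (simp only: K_automorphism_simps[OF aut] fix_x)
  qed
  show ?thesis
  proof (induct f)
    case 0
    then show ?case by (simp add: K_automorphism_simps[OF aut])
  next
    case (pCons a f)
    have "pCons a f = [:a:] + vary * f" by (simp add: vary_def)
    then have "\<rho> (pCons a f) = [:a:] + \<rho> vary * pcompose f (\<rho> vary)"
      using pCons by (simp only: K_automorphism_simps[OF aut] const)
    then show ?case by (simp add: pcompose_pCons)
  qed
qed

lemma degree_le_1_eq: "degree q \<le> 1 \<Longrightarrow> q = [:coeff q 0, coeff q 1:]"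
  by (rule poly_eqI) (auto simp: coeff_pCons coeff_eq_0 split: nat.split)

lemma K_automorphism_fixing_varx_affine:
  fixes \<rho> :: "'a::field bipoly \<Rightarrow> 'a bipoly"
  assumes aut: "is_K_automorphism \<rho>" and fix_x: "\<rho> varx = varx"
  obtains v u where "\<rho> vary = [:v, [:u:]:]" "u \<noteq> 0"
proof -
  obtain h where "\<rho> h = vary" using aut unfolding is_K_automorphism_def bij_def surj_def by metis
  then have h: "pcompose h (\<rho> vary) = vary" by (metis K_automorphism_fixing_varx[OF aut fix_x])
  then have "degree (pcompose h (\<rho> vary)) = 1" by (simp add: vary_def)
  then have "degree h * degree (\<rho> vary) = 1" by (simp only: degree_pcompose)
  then have "degree h = 1" "degree (\<rho> vary) = 1" by simp_all
  have "h = [:coeff h 0, coeff h 1:]" by (rule degree_le_1_eq) (simp add: \<open>degree h = 1\<close>)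
  then obtain h0 h1 where h_eq: "h = [:h0, h1:]" by blast
  have "\<rho> vary = [:coeff (\<rho> vary) 0, coeff (\<rho> vary) 1:]"
    by (rule degree_le_1_eq) (simp add: \<open>degree (\<rho> vary) = 1\<close>)
  then obtain v w where r_eq: "\<rho> vary = [:v, w:]" by blast
  have "w * h1 = 1"
    using arg_cong[OF h, of "\<lambda>p. coeff p 1"] unfolding h_eq r_eq
    by (simp add: vary_def pcompose_pCons mult.commute)
  then have "is_unit w" by (metis dvd_triv_left)
  then obtain u where "w = [:u:]" using is_unit_poly_iff by blast
  moreover have "w \<noteq> 0" using \<open>w * h1 = 1\<close> by auto
  ultimately show thesis using that r_eq by auto
qed

subsection \<open>Point evaluation and the restriction to \<open>x = 0\<close>\<close>

definition bipoly_eval :: "'a::comm_ring_1 bipoly \<Rightarrow> 'a \<Rightarrow> 'a \<Rightarrow> 'a" where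
  "bipoly_eval f a b = poly (poly f [:b:]) a"

lemma bipoly_eval_simps [simp]:
  "bipoly_eval (f + g) a b = bipoly_eval f a b + bipoly_eval g a b"
  "bipoly_eval (f * g) a b = bipoly_eval f a b * bipoly_eval g a b"
  "bipoly_eval (f - g) a b = bipoly_eval f a b - bipoly_eval g a b"
  "bipoly_eval (kconst c) a b = c" "bipoly_eval varx a b = a" "bipoly_eval vary a b = b"
  "bipoly_eval 0 a b = 0" "bipoly_eval 1 a b = 1"
  by (simp_all add: bipoly_eval_def kconst_def varx_def vary_def)

lemma bipoly_eval_K_automorphism:
  assumes "is_K_automorphism \<rho>"
  shows "bipoly_eval (\<rho> f) a b = bipoly_eval f (bipoly_eval (\<rho> varx) a b) (bipoly_eval (\<rho> vary) a b)"
  by (induct f rule: bipoly_induct) (simp_all add: K_automorphism_simps[OF assms])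

definition restrict_x0 :: "'a::comm_ring_1 bipoly \<Rightarrow> 'a poly" where
  "restrict_x0 f = map_poly (\<lambda>c. poly c 0) f"

lemma restrict_x0_0 [simp]: "restrict_x0 0 = 0"
  by (simp add: restrict_x0_def)

lemma restrict_x0_pCons [simp]: "restrict_x0 (pCons c f) = pCons (poly c 0) (restrict_x0 f)"
  unfolding restrict_x0_def by (rule map_poly_pCons) simp

lemma restrict_x0_smult: "restrict_x0 (smult c f) = smult (poly c 0) (restrict_x0 f)"
  by (induct f) simp_all

lemma poly_restrict_x0: "poly (restrict_x0 f) b = bipoly_eval f 0 b"
  by (induct f) (simp_all add: bipoly_eval_def)

lemma restrict_x0_K_automorphism:
  fixes \<rho> :: "'a::{idom, ring_char_0} bipoly \<Rightarrow> 'a bipoly"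
  assumes "is_K_automorphism \<rho>" and "\<rho> varx = kconst l * varx"
  shows "restrict_x0 (\<rho> f) = pcompose (restrict_x0 f) (restrict_x0 (\<rho> vary))"
proof (rule poly_ext)
  fix y
  have "bipoly_eval (\<rho> varx) 0 y = 0" using assms(2) by simp
  then show "poly (restrict_x0 (\<rho> f)) y = poly (pcompose (restrict_x0 f) (restrict_x0 (\<rho> vary))) y"
    by (simp add: poly_restrict_x0 bipoly_eval_K_automorphism[OF assms(1), of f] poly_pcompose)
qed

lemma varx_dvd_if_restrict_x0_eq_0:
  fixes p :: "'a::field bipoly"
  assumes "restrict_x0 p = 0"
  shows "varx dvd p"
proof -
  let ?q = "map_poly (\<lambda>c. c div [:0, 1:]) p"
  have "varx * ?q = p"
  proof (rule poly_eqI)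
    fix i
    have "poly (coeff p i) 0 = 0"
      using arg_cong[OF assms, of "\<lambda>f. coeff f i"] by (simp add: restrict_x0_def coeff_map_poly)
    then have "[:0, 1:] dvd coeff p i" using poly_eq_0_iff_dvd[of "coeff p i" 0] by simp
    then have "[:0, 1:] * (coeff p i div [:0, 1:]) = coeff p i" by (rule dvd_mult_div_cancel)
    then show "coeff (varx * ?q) i = coeff p i"
      by (simp only: varx_def coeff_map_poly) (simp add: coeff_map_poly)
  qed
  then show ?thesis by (metis dvd_triv_left)
qed

lemma simple_derivation_imp_derivation: "simple_derivation D \<Longrightarrow> is_derivation D"
  by (simp add: simple_derivation_def)

lemma simple_derivationD:
  assumes "simple_derivation D" and "is_ideal I" "I \<noteq> {0}" "I \<noteq> UNIV"
  shows "\<not> D ` I \<subseteq> I"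
  using assms unfolding simple_derivation_def by blast

lemma is_ideal_principal_ideal: "is_ideal (principal_ideal g)"
  unfolding is_ideal_def principal_ideal_def
proof (intro conjI ballI allI)
  show "0 \<in> {g * f |f. True}" by (auto intro: exI[of _ 0])
next
  fix a b assume "a \<in> {g * f |f. True}" "b \<in> {g * f |f. True}"
  then obtain f1 f2 where "a = g * f1" "b = g * f2" by blast
  then have "a + b = g * (f1 + f2)" by (simp add: distrib_left)
  then show "a + b \<in> {g * f |f. True}" by blast
next
  fix a r assume "a \<in> {g * f |f. True}"
  then obtain f where "a = g * f" by blast
  then have "r * a = g * (r * f)" by (simp add: mult.left_commute)
  then show "r * a \<in> {g * f |f. True}" by blast
qed

lemma simple_derivation_not_dvd:
  assumes simple: "simple_derivation D" and "g \<noteq> 0" "\<not> is_unit g"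
  shows "\<not> g dvd D g"
proof
  assume "g dvd D g"
  then obtain h where h: "D g = g * h" by (auto simp: dvd_def)
  note der = simple_derivation_imp_derivation[OF simple]
  let ?I = "principal_ideal g"
  have "g \<in> ?I" unfolding principal_ideal_def by (auto intro: exI[of _ 1])
  then have "?I \<noteq> {0}" using \<open>g \<noteq> 0\<close> by auto
  moreover have "1 \<notin> ?I" using \<open>\<not> is_unit g\<close> unfolding principal_ideal_def by (auto simp: dvd_def)
  then have "?I \<noteq> UNIV" by auto
  ultimately have "\<not> D ` ?I \<subseteq> ?I"
    using simple_derivationD[OF simple is_ideal_principal_ideal] by blast
  moreover have "D ` ?I \<subseteq> ?I"
  proof
    fix z assume "z \<in> D ` ?I"
    then obtain f where "z = D (g * f)" unfolding principal_ideal_def by auto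
    also have "\<dots> = g * (f * h + D f)" using h by (simp add: derivation_simps[OF der] algebra_simps)
    finally show "z \<in> ?I" unfolding principal_ideal_def by auto
  qed
  ultimately show False by contradiction
qed

lemma monic_linear_x_not_unit: "\<not> is_unit ([:[:c, 1:]:] :: 'a::field bipoly)"
  by (simp add: is_unit_const_poly_iff is_unit_iff_degree)

lemma varx_not_unit: "\<not> is_unit (varx :: 'a::field bipoly)"
  unfolding varx_def by (rule monic_linear_x_not_unit)

lemma simple_derivation_poly_x_no_root:
  fixes D :: "'a::field bipoly \<Rightarrow> 'a bipoly"
  assumes simple: "simple_derivation D" and Dx: "D varx = [:c:]"
  shows "poly c a \<noteq> 0"
proof
  assume "poly c a = 0"
  then obtain k where k: "c = [:-a, 1:] * k" using poly_eq_0_iff_dvd by (metis dvdE)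
  define g :: "'a bipoly" where "g = [:[:-a, 1:]:]"
  note der = simple_derivation_imp_derivation[OF simple]
  have "g = varx - kconst a" by (simp add: g_def varx_def kconst_def)
  then have "D g = D varx - D (kconst a)" by (simp only: derivation_simps[OF der])
  also have "\<dots> = g * [:k:]" using Dx k by (simp add: derivation_simps[OF der] g_def)
  finally have "g dvd D g" by (rule dvdI)
  moreover have "g \<noteq> 0" by (simp add: g_def)
  moreover have "\<not> is_unit g" unfolding g_def by (rule monic_linear_x_not_unit)
  ultimately show False using simple_derivation_not_dvd[OF simple] by blast
qed

lemma simple_derivation_Dx_in_Kx_imp_const:
  fixes D :: "'a::field bipoly \<Rightarrow> 'a bipoly"
  assumes "alg_closed TYPE('a)" and "simple_derivation D" and "D varx = [:c:]"
  obtains c0 where "c0 \<noteq> 0" "D varx = kconst c0"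
proof -
  have "degree c = 0"
    using assms simple_derivation_poly_x_no_root unfolding alg_closed_def by (meson not_gr0)
  then obtain c0 where "c = [:c0:]" by (meson degree_eq_zeroE)
  moreover have "c0 \<noteq> 0" using simple_derivation_poly_x_no_root[OF assms(2,3), of 0] calculation by auto
  ultimately show thesis using that assms(3) by (simp add: kconst_def)
qed

lemma pderiv_surj:
  fixes b :: "'a::field_char_0 poly"
  obtains B where "pderiv B = b"
proof -
  let ?B = "\<Sum>i\<le>degree b. monom (coeff b i / of_nat (Suc i)) (Suc i)"
  have "pderiv ?B = (\<Sum>i\<le>degree b. pderiv (monom (coeff b i / of_nat (Suc i)) (Suc i)))"
    using higher_pderiv_sum[of 1] by simp
  also have "\<dots> = (\<Sum>i\<le>degree b. monom (coeff b i) i)"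
    by (rule sum.cong) (simp_all add: pderiv_monom del: of_nat_Suc)
  also have "\<dots> = b" by (rule poly_as_sum_of_monoms)
  finally show thesis by (rule that)
qed

text \<open>If \<open>D x = c\<^sub>0\<close> and \<open>D y = \<beta>(x)\<close>, then \<open>c\<^sub>0 y - B(x)\<close> with \<open>B' = \<beta>\<close> is a first integral.\<close>

lemma simple_derivation_Dy_not_in_Kx:
  fixes D :: "'a::field_char_0 bipoly \<Rightarrow> 'a bipoly"
  assumes simple: "simple_derivation D" and "c0 \<noteq> 0" and Dx: "D varx = kconst c0"
  shows "D vary \<noteq> [:\<beta>:]"
proof
  assume Dy: "D vary = [:\<beta>:]"
  note der = simple_derivation_imp_derivation[OF simple]
  obtain B where B: "pderiv B = \<beta>" using pderiv_surj by blast
  define f :: "'a bipoly" where "f = [:-B, [:c0:]:]"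
  have "f = kconst c0 * vary - [:B:]" by (simp add: f_def kconst_def vary_def)
  then have "D f = kconst c0 * [:\<beta>:] - [:pderiv B:] * kconst c0"
    using Dx Dy by (simp only: derivation_simps[OF der] derivation_const_y[OF der]
        mult_zero_right add_0_left add_0_right)
  also have "\<dots> = 0" using B by (simp add: kconst_def mult.commute)
  finally have "D f = 0" .
  moreover have "f \<noteq> 0" using \<open>c0 \<noteq> 0\<close> by (simp add: f_def)
  moreover have "\<not> is_unit f" using \<open>c0 \<noteq> 0\<close> by (simp add: f_def is_unit_poly_iff)
  ultimately show False using simple_derivation_not_dvd[OF simple, of f] by simp
qed

subsection \<open>Automorphisms with a fixed point\<close>

inductive_set displacement_ideal :: "('a::comm_ring_1 bipoly \<Rightarrow> 'a bipoly) \<Rightarrow> 'a bipoly set"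
  for \<rho> where
  zero: "0 \<in> displacement_ideal \<rho>"
| step: "h \<in> displacement_ideal \<rho> \<Longrightarrow> a * (\<rho> b - b) + h \<in> displacement_ideal \<rho>"

lemma displacement_ideal_add:
  "h \<in> displacement_ideal \<rho> \<Longrightarrow> k \<in> displacement_ideal \<rho> \<Longrightarrow> h + k \<in> displacement_ideal \<rho>"
proof (induct h rule: displacement_ideal.induct)
  case (step h a b)
  then have "a * (\<rho> b - b) + (h + k) \<in> displacement_ideal \<rho>" by (intro displacement_ideal.step)
  then show ?case by (simp add: add.assoc)
qed simp

lemma displacement_ideal_mult:
  "h \<in> displacement_ideal \<rho> \<Longrightarrow> r * h \<in> displacement_ideal \<rho>"
proof (induct h rule: displacement_ideal.induct)
  case (step h a b)
  then have "(r * a) * (\<rho> b - b) + r * h \<in> displacement_ideal \<rho>" by (intro displacement_ideal.step)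
  then show ?case by (simp add: algebra_simps)
qed (simp add: displacement_ideal.zero)

lemma displacement_ideal_generator: "a * (\<rho> b - b) \<in> displacement_ideal \<rho>"
  using displacement_ideal.step[OF displacement_ideal.zero] by simp

lemma is_ideal_displacement_ideal: "is_ideal (displacement_ideal \<rho>)"
  unfolding is_ideal_def
  using displacement_ideal.zero displacement_ideal_add displacement_ideal_mult by blast

lemma displacement_ideal_derivation_stable:
  assumes der: "is_derivation D" and comm: "\<And>f. \<rho> (D f) = D (\<rho> f)"
    and "h \<in> displacement_ideal \<rho>"
  shows "D h \<in> displacement_ideal \<rho>"
  using assms(3)
proof (induct h rule: displacement_ideal.induct)
  case zero
  then show ?case using derivation_simps[OF der] displacement_ideal.zero by simp
next
  case (step h a b)
  have "D (a * (\<rho> b - b) + h) = D a * (\<rho> b - b) + a * (\<rho> (D b) - D b) + D h"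
    by (simp add: derivation_simps[OF der] comm algebra_simps)
  then show ?case
    using step displacement_ideal_add displacement_ideal_generator by metis
qed

lemma displacement_ideal_eval:
  assumes "\<And>f. bipoly_eval (\<rho> f) a b = bipoly_eval f a b" and "h \<in> displacement_ideal \<rho>"
  shows "bipoly_eval h a b = 0"
  using assms(2) by induct (simp_all add: assms(1))

lemma Aut_der_fixed_point_imp_id:
  assumes simple: "simple_derivation D" and aut: "\<rho> \<in> Aut_der D"
    and fix_pt: "bipoly_eval (\<rho> varx) a b = a" "bipoly_eval (\<rho> vary) a b = b"
  shows "\<rho> = id"
proof (rule ccontr)
  assume "\<rho> \<noteq> id"
  then obtain f where "\<rho> f \<noteq> f" by (auto simp: fun_eq_iff)
  note der = simple_derivation_imp_derivation[OF simple]
  have comm: "\<rho> (D f) = D (\<rho> f)" for f using aut by (simp add: Aut_der_def fun_eq_iff)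
  have "is_K_automorphism \<rho>" using aut by (simp add: Aut_der_def)
  note eval_rho = bipoly_eval_K_automorphism[OF this]
  have "bipoly_eval (\<rho> f) a b = bipoly_eval f a b" for f
    using eval_rho[of f a b] fix_pt by simp
  then have "1 \<notin> displacement_ideal \<rho>" using displacement_ideal_eval[of \<rho> a b 1] by auto
  then have proper: "displacement_ideal \<rho> \<noteq> UNIV" by auto
  have "1 * (\<rho> f - f) \<in> displacement_ideal \<rho>" by (rule displacement_ideal_generator)
  then have "displacement_ideal \<rho> \<noteq> {0}" using \<open>\<rho> f \<noteq> f\<close> by auto
  with proper have "\<not> D ` displacement_ideal \<rho> \<subseteq> displacement_ideal \<rho>"
    using simple_derivationD[OF simple is_ideal_displacement_ideal] by blast
  moreover have "D ` displacement_ideal \<rho> \<subseteq> displacement_ideal \<rho>"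
    using displacement_ideal_derivation_stable[of D \<rho>] der comm by blast
  ultimately show False by contradiction
qed

subsection \<open>Translations \<open>y \<mapsto> y + v(x)\<close>\<close>

lemma poly_periodic_imp_const:
  fixes g :: "'b::{idom, ring_char_0} poly"
  assumes "v \<noteq> 0" and periodic: "\<And>z. poly g (z + v) = poly g z"
  shows "g = [:poly g 0:]"
proof (rule ccontr)
  assume "g \<noteq> [:poly g 0:]"
  then have nz: "g - [:poly g 0:] \<noteq> 0" by simp
  have "poly g (of_nat k * v) = poly g 0" for k
    by (induct k) (simp_all add: distrib_right periodic add.commute[of v])
  then have "range (\<lambda>k. of_nat k * v) \<subseteq> {z. poly (g - [:poly g 0:]) z = 0}" by auto
  moreover have "inj (\<lambda>k::nat. of_nat k * v)" by (rule injI) (use \<open>v \<noteq> 0\<close> in simp)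
  then have "infinite (range (\<lambda>k::nat. of_nat k * v))" using finite_imageD by blast
  ultimately show False using poly_roots_finite[OF nz] finite_subset by blast
qed

lemma pcompose_translation_fixed_imp_const:
  fixes g :: "'b::{idom, ring_char_0} poly"
  assumes "v \<noteq> 0" and "pcompose g [:v, 1:] = g"
  shows "g = [:poly g 0:]"
proof (rule poly_periodic_imp_const[OF assms(1)])
  fix z
  show "poly g (z + v) = poly g z"
    using arg_cong[OF assms(2), of "\<lambda>p. poly p z"] by (simp add: poly_pcompose add.commute)
qed

lemma mult_eq_smult_pderiv_imp_zero:
  fixes v a :: "'a::field_char_0 poly"
  assumes "v \<noteq> 0" "c \<noteq> 0" and eq: "v * a = smult c (pderiv v)"
  shows "a = 0"
proof (rule ccontr)
  assume "a \<noteq> 0"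
  then have "pderiv v \<noteq> 0" using eq \<open>v \<noteq> 0\<close> by auto
  then have "degree v > 0" using pderiv_eq_0_iff by auto
  moreover have "degree (v * a) = degree v + degree a" using \<open>v \<noteq> 0\<close> \<open>a \<noteq> 0\<close> by (rule degree_mult_eq)
  moreover have "degree (smult c (pderiv v)) = degree v - 1" using \<open>c \<noteq> 0\<close> by (simp add: degree_pderiv)
  ultimately show False using eq by simp
qed

text \<open>The invariants of \<open>\<tau> : f(x,y) \<mapsto> f(x, y + v(x))\<close> are exactly \<open>\<bbbK>[x]\<close>. So \<open>D x = c\<^sub>0\<close>, and
  since \<open>\<tau>(D y) = D y + c\<^sub>0 v'\<close>, the polynomial \<open>v \<cdot> D y - c\<^sub>0 v' y\<close> is invariant; a degree count
  then puts \<open>D y\<close> in \<open>\<bbbK>[x]\<close>.\<close>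

lemma simple_derivation_not_commuting_translation:
  fixes D :: "'a::field_char_0 bipoly \<Rightarrow> 'a bipoly"
  assumes ac: "alg_closed TYPE('a)" and simple: "simple_derivation D" and "v \<noteq> 0"
    and comm: "\<And>f. D (pcompose f [:v, 1:]) = pcompose (D f) [:v, 1:]"
  shows False
proof -
  note der = simple_derivation_imp_derivation[OF simple]
  have invariant: "g = [:poly g 0:]" if "pcompose g [:v, 1:] = g" for g
    using pcompose_translation_fixed_imp_const[OF \<open>v \<noteq> 0\<close> that] .
  have "pcompose (D varx) [:v, 1:] = D varx"
    using comm[of varx] by (simp add: varx_def)
  then have "D varx = [:poly (D varx) 0:]" by (rule invariant)
  then obtain c0 where "c0 \<noteq> 0" and Dx: "D varx = kconst c0"
    by (rule simple_derivation_Dx_in_Kx_imp_const[OF ac simple])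
  define q where "q = D vary"
  define w where "w = smult c0 (pderiv v)"
  have "pcompose vary [:v, 1:] = [:v:] + vary" by (simp add: vary_def pcompose_pCons)
  then have "pcompose q [:v, 1:] = D ([:v:] + vary)" using comm[of vary] by (simp add: q_def)
  also have "\<dots> = [:pderiv v:] * kconst c0 + q"
    using Dx by (simp only: derivation_simps[OF der] derivation_const_y[OF der] q_def)
  also have "\<dots> = q + [:w:]" by (simp add: w_def kconst_def)
  finally have tq: "pcompose q [:v, 1:] = q + [:w:]" .
  define Q where "Q = smult v q - [:0, w:]"
  have "pcompose Q [:v, 1:] = Q"
    unfolding Q_def pcompose_diff pcompose_smult tq by (simp add: pcompose_pCons smult_add_right)
  then have "Q = [:poly Q 0:]" by (rule invariant)
  then obtain e where "Q = [:e:]" by blast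
  then have Q: "coeff Q i = 0" if "i \<ge> 1" for i
    using that by (cases i) auto
  have q_high: "coeff q i = 0" if "i \<ge> 2" for i
    using Q[of i] that \<open>v \<noteq> 0\<close> by (cases i; cases "i - 1") (auto simp: Q_def)
  have q_1: "coeff q 1 = 0"
    using Q[of 1] mult_eq_smult_pderiv_imp_zero[OF \<open>v \<noteq> 0\<close> \<open>c0 \<noteq> 0\<close>] by (simp add: Q_def w_def)
  have "q = [:coeff q 0:]"
  proof (rule poly_eqI)
    fix i
    show "coeff q i = coeff [:coeff q 0:] i"
      using q_high q_1 by (cases i; cases "i - 1") auto
  qed
  then show False
    using simple_derivation_Dy_not_in_Kx[OF simple \<open>c0 \<noteq> 0\<close> Dx] by (simp add: q_def)
qed

subsection \<open>Automorphisms without a fixed point on \<open>x = 0\<close>\<close>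

lemma fixed_point_free_poly:
  fixes t :: "'a::field poly"
  assumes "alg_closed TYPE('a)" and "\<And>z. poly t z \<noteq> z"
  obtains b where "b \<noteq> 0" "t = [:b, 1:]"
proof -
  have "poly (t - [:0, 1:]) z \<noteq> 0" for z using assms(2)[of z] by simp
  then have "degree (t - [:0, 1:]) = 0" using assms(1) unfolding alg_closed_def by (meson not_gr0)
  then obtain b where b: "t - [:0, 1:] = [:b:]" by (meson degree_eq_zeroE)
  then have "t = [:b, 1:]" by (metis add_pCons diff_eq_eq pCons_0_0 add.right_neutral add.commute)
  moreover have "b \<noteq> 0" using assms(2)[of 0] calculation by auto
  ultimately show thesis using that by blast
qed

lemma pcompose_translation_eq_smult_imp_1:
  fixes p :: "'a::field poly"
  assumes "p \<noteq> 0" and "pcompose p [:b, 1:] = smult l p"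
  shows "l = 1"
proof -
  have "lead_coeff p = lead_coeff (pcompose p [:b, 1:])"
    using lead_coeff_comp[of "[:b, 1:]" p] by simp
  also have "\<dots> = l * lead_coeff p" unfolding assms(2) by (rule lead_coeff_smult)
  finally show ?thesis using assms(1) by (metis mult_cancel_right1 leading_coeff_0_iff)
qed

lemma Aut_der_translating_x0_fixes_varx:
  fixes D \<rho> :: "'a::field_char_0 bipoly \<Rightarrow> 'a bipoly"
  assumes simple: "simple_derivation D" and aut': "\<rho> \<in> Aut_der D"
    and rx: "\<rho> varx = kconst l * varx" and ry: "restrict_x0 (\<rho> vary) = [:b, 1:]"
  shows "\<rho> varx = varx"
proof -
  note der = simple_derivation_imp_derivation[OF simple]
  have aut: "is_K_automorphism \<rho>" and comm: "\<rho> (D varx) = D (\<rho> varx)"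
    using aut' by (auto simp: Aut_der_def fun_eq_iff)
  have nonzero: "restrict_x0 (D varx) \<noteq> 0"
    using varx_dvd_if_restrict_x0_eq_0 simple_derivation_not_dvd[OF simple _ varx_not_unit]
    by (auto simp: varx_def)
  have "\<rho> (D varx) = kconst l * D varx"
    by (simp only: comm rx derivation_simps[OF der] mult_zero_right add_0_left)
  then have "pcompose (restrict_x0 (D varx)) [:b, 1:] = restrict_x0 (kconst l * D varx)"
    using restrict_x0_K_automorphism[OF aut rx, of "D varx"] ry by simp
  also have "\<dots> = smult l (restrict_x0 (D varx))" by (simp add: restrict_x0_smult kconst_def)
  finally have "l = 1" by (rule pcompose_translation_eq_smult_imp_1[OF nonzero])
  then show ?thesis using rx by (simp add: kconst_def varx_def)
qed

lemma Aut_der_fixed_point_free_impossible: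
  fixes D \<rho> :: "'a::field_char_0 bipoly \<Rightarrow> 'a bipoly"
  assumes ac: "alg_closed TYPE('a)" and simple: "simple_derivation D" and aut': "\<rho> \<in> Aut_der D"
    and rx: "\<rho> varx = kconst l * varx" and no_fix: "\<And>y. bipoly_eval (\<rho> vary) 0 y \<noteq> y"
  shows False
proof -
  have aut: "is_K_automorphism \<rho>" and comm: "\<And>f. \<rho> (D f) = D (\<rho> f)"
    using aut' by (auto simp: Aut_der_def fun_eq_iff)
  obtain b where "b \<noteq> 0" and b: "restrict_x0 (\<rho> vary) = [:b, 1:]"
    using fixed_point_free_poly[OF ac] no_fix by (metis poly_restrict_x0)
  have fix_x: "\<rho> varx = varx" by (rule Aut_der_translating_x0_fixes_varx[OF simple aut' rx b])
  obtain v u where ry: "\<rho> vary = [:v, [:u:]:]" by (rule K_automorphism_fixing_varx_affine[OF aut fix_x])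
  then have "u = 1" "poly v 0 = b" using b by simp_all
  have "v \<noteq> 0" using \<open>poly v 0 = b\<close> \<open>b \<noteq> 0\<close> by auto
  have translation: "\<rho> f = pcompose f [:v, 1:]" for f
    unfolding K_automorphism_fixing_varx[OF aut fix_x, of f] ry \<open>u = 1\<close>
    by (simp add: one_pCons[symmetric])
  have "D (pcompose f [:v, 1:]) = pcompose (D f) [:v, 1:]" for f
    using comm[of f] by (simp only: translation)
  then show False by (rule simple_derivation_not_commuting_translation[OF ac simple \<open>v \<noteq> 0\<close>])
qed

theorem lemma2p4:
  fixes D \<rho> :: "'a::field_char_0 bipoly \<Rightarrow> 'a bipoly"
  assumes "alg_closed TYPE('a)"
    and "simple_derivation D"
    and "\<rho> \<in> Aut_der D"
    and "\<rho> ` principal_ideal varx = principal_ideal varx"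
  shows "\<rho> = id"
proof -
  have "is_K_automorphism \<rho>" using assms(3) by (simp add: Aut_der_def)
  then obtain l where l: "\<rho> varx = kconst l * varx"
    using K_automorphism_stabilising_varx assms(4) by blast
  show ?thesis
  proof (cases "\<exists>y. bipoly_eval (\<rho> vary) 0 y = y")
    case True
    then obtain y where "bipoly_eval (\<rho> vary) 0 y = y" ..
    moreover have "bipoly_eval (\<rho> varx) 0 y = 0" using l by simp
    ultimately show ?thesis using Aut_der_fixed_point_imp_id[OF assms(2,3)] by blast
  next
    case False
    then show ?thesis using Aut_der_fixed_point_free_impossible[OF assms(1-3) l] by blast
  qed
qed

end
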